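(* In the zero-sum three-door Monty Hall game described in the context (value $V=2/3$), a mixed strategy $Q$ of Monte is minimax (i.e. $\max_P W(P,Q)=2/3$) if and only if $Q=Q^*_{\lambda_1,\lambda_2,\lambda_3}$ for some $\lambda_1,\lambda_2,\lambda_3\in[0,1]$, where $Q^*_{\lambda_1,\lambda_2,\lambda_3}$ assigns to the pure strategies $(1,2),(1,3),(2,1),(2,3),(3,1),(3,2)$ the probabilities $\lambda_1/3,(1-\lambda_1)/3,\lambda_2/3,(1-\lambda_2)/3,\lambda_3/3,(1-\lambda_3)/3$ respectively; equivalently, iff $\theta$ is uniformly distributed on $\{1,2,3\}$ under $Q$.
   Context: Doors are numbered $1,2,3$. A pure strategy of Monte is a pair $(\theta,d)$ with $\theta\in\{1,2,3\}$ (the door hiding the prize) and $d\in\{1,2,3\}\setminus\{\theta\}$ (six strategies). A pure strategy of Conie is a triple $x\,a\,b$ with $x\in\{1,2,3\}$ and $a,b\in\{\mathrm{h},\mathrm{s}\}$ (twelve strategies). Under the profile $((\theta,d),x\,a\,b)$: Monte offers door $y=\theta$ if $x\neq\theta$ and $y=d$ if $x=\theta$; Conie's action is $a$ if $y$ is the smaller of the two doors in $\{1,2,3\}\setminus\{x\}$ and $b$ otherwise; her final choice is $z=x$ for action $\mathrm{h}$ and $z=y$ for action $\mathrm{s}$; she wins (payoff 1) iff $z=\theta$, else payoff 0; Monte's payoff is the negative. Mixed strategies are probability distributions on pure strategies, played independently; $W(P,Q)$ denotes the probability that Conie wins when Conie plays $P$ and Monte plays $Q$. A strategy $Q$ of Monte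 is minimax if $\max_P W(P,Q)=\min_{Q'}\max_P W(P,Q')$. *)

theory Defs
  imports "HOL-Probability.Probability"
begin

datatype action = Hold | Switch

type_synonym monte_pure = "nat \<times> nat"
type_synonym conie_pure = "nat \<times> action \<times> action"

definition doors :: "nat set" where "doors = {1,2,3}"

definition monte_strats :: "monte_pure set" where
  "monte_strats = {(\<theta>, d). \<theta> \<in> doors \<and> d \<in> doors \<and> d \<noteq> \<theta>}"

definition conie_strats :: "conie_pure set" where
  "conie_strats = {(x, a, b). x \<in> doors}"

definition win :: "conie_pure \<Rightarrow> monte_pure \<Rightarrow> real" where
  "win c m = (case c of (x, a, b) \<Rightarrow> case m of (\<theta>, d) \<Rightarrow>
     (let y = (if x \<noteq> \<theta> then \<theta> else d);
          act = (if y = Min (doors - {x}) then a else b);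
          z = (if act = Hold then x else y)
      in if z = \<theta> then 1 else 0))"

definition monte_mixed :: "monte_pure pmf set" where
  "monte_mixed = {Q. set_pmf Q \<subseteq> monte_strats}"

definition conie_mixed :: "conie_pure pmf set" where
  "conie_mixed = {P. set_pmf P \<subseteq> conie_strats}"

definition W :: "conie_pure pmf \<Rightarrow> monte_pure pmf \<Rightarrow> real" where
  "W P Q = (\<Sum>c\<in>conie_strats. \<Sum>m\<in>monte_strats. pmf P c * pmf Q m * win c m)"

definition is_minimax :: "monte_pure pmf \<Rightarrow> bool" where
  "is_minimax Q \<longleftrightarrow> Q \<in> monte_mixed \<and>
     (SUP P\<in>conie_mixed. W P Q) = (INF Q'\<in>monte_mixed. SUP P\<in>conie_mixed. W P Q')"

definition Qstar :: "real \<Rightarrow> real \<Rightarrow> real \<Rightarrow> monte_pure \<Rightarrow> real" where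
  "Qstar l1 l2 l3 m =
     (if m = (1,2) then l1/3 else if m = (1,3) then (1-l1)/3
      else if m = (2,1) then l2/3 else if m = (2,3) then (1-l2)/3
      else if m = (3,1) then l3/3 else if m = (3,2) then (1-l3)/3 else 0)"

end

theory Submission
  imports Defs
begin

text \<open>
  Against a mixed strategy Q of Monte, write p(\<theta>) for the probability that the prize is behind
  door \<theta>. The pure strategy "pick x, always switch" wins exactly when \<theta> \<noteq> x, i.e. with
  probability 1 - p(x); as p(1) + p(2) + p(3) = 1, some x has p(x) \<le> 1/3, so Conie can always win with
  probability at least 2/3, and strictly more unless all p(\<theta>) equal 1/3. Conversely, if every
  p(\<theta>) is 1/3, each of Conie's two possible actions wins with probability at most 1/3
  (holding wins at most p(x), switching to y wins p(y)), so no strategy beats 2/3. Hence the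
  value is 2/3 and the minimax strategies are exactly those with uniform prize location,
  which are exactly the Q*'s.
\<close>

abbreviation prize_prob :: "monte_pure pmf \<Rightarrow> nat \<Rightarrow> real" where
  "prize_prob Q \<theta> \<equiv> measure_pmf.prob Q {m. fst m = \<theta>}"

definition pure_win :: "monte_pure pmf \<Rightarrow> conie_pure \<Rightarrow> real" where
  "pure_win Q c = (\<Sum>m\<in>monte_strats. pmf Q m * win c m)"

definition best_reply_win :: "monte_pure pmf \<Rightarrow> real" where
  "best_reply_win Q = (SUP P\<in>conie_mixed. W P Q)"

lemma monte_strats_eq: "monte_strats = {(1,2), (1,3), (2,1), (2,3), (3,1), (3,2)}"
  by (auto simp: monte_strats_def doors_def)

lemma finite_monte_strats: "finite monte_strats"
  by (simp add: monte_strats_eq)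

lemma sum_monte_strats:
  "(\<Sum>m\<in>monte_strats. f m) = f (1,2) + f (1,3) + f (2,1) + f (2,3) + f (3,1) + (f (3,2) :: real)"
  by (simp add: monte_strats_eq add.assoc)

lemma UNIV_action: "(UNIV :: action set) = {Hold, Switch}"
  using action.exhaust by blast

lemma finite_conie_strats: "finite conie_strats"
proof -
  have "conie_strats = doors \<times> (UNIV :: action set) \<times> (UNIV :: action set)"
    by (auto simp: conie_strats_def)
  also have "finite \<dots>"
    unfolding UNIV_action doors_def by simp
  finally show ?thesis .
qed

lemma conie_strats_cases:
  assumes "c \<in> conie_strats"
  obtains a b where "c = (1, a, b)" | a b where "c = (2, a, b)" | a b where "c = (3, a, b)"
  using assms by (cases c) (auto simp: conie_strats_def doors_def)

lemma return_pmf_in_conie_mixed: "c \<in> conie_strats \<Longrightarrow> return_pmf c \<in> conie_mixed"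
  by (simp add: conie_mixed_def)

lemma sum_pmf_monte_strats: "Q \<in> monte_mixed \<Longrightarrow> sum (pmf Q) monte_strats = 1"
  using finite_monte_strats by (simp add: monte_mixed_def sum_pmf_eq_1)

lemma sum_pmf_conie_strats: "P \<in> conie_mixed \<Longrightarrow> sum (pmf P) conie_strats = 1"
  using finite_conie_strats by (simp add: conie_mixed_def sum_pmf_eq_1)

lemma prize_prob_eq_sum:
  assumes "Q \<in> monte_mixed"
  shows "prize_prob Q \<theta> = sum (pmf Q) ({m. fst m = \<theta>} \<inter> monte_strats)"
proof -
  have "set_pmf Q \<subseteq> monte_strats"
    using assms by (simp add: monte_mixed_def)
  then have "{m. fst m = \<theta>} \<inter> set_pmf Q = ({m. fst m = \<theta>} \<inter> monte_strats) \<inter> set_pmf Q"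
    by blast
  then have "prize_prob Q \<theta> = measure_pmf.prob Q ({m. fst m = \<theta>} \<inter> monte_strats)"
    by (metis measure_Int_set_pmf)
  then show ?thesis
    using finite_monte_strats by (simp add: measure_measure_pmf_finite)
qed

lemma prize_prob_doors:
  assumes "Q \<in> monte_mixed"
  shows "prize_prob Q 1 = pmf Q (1,2) + pmf Q (1,3)"
    and "prize_prob Q 2 = pmf Q (2,1) + pmf Q (2,3)"
    and "prize_prob Q 3 = pmf Q (3,1) + pmf Q (3,2)"
  by (simp_all add: prize_prob_eq_sum[OF assms] monte_strats_eq Int_insert_right)

lemma sum_prize_prob:
  "Q \<in> monte_mixed \<Longrightarrow> prize_prob Q 1 + prize_prob Q 2 + prize_prob Q 3 = 1"
  using sum_pmf_monte_strats[of Q] prize_prob_doors[of Q] unfolding sum_monte_strats by linarith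

lemma prize_prob_uniform_iff:
  "(\<forall>\<theta>\<in>doors. prize_prob Q \<theta> = 1/3) \<longleftrightarrow>
     prize_prob Q 1 = 1/3 \<and> prize_prob Q 2 = 1/3 \<and> prize_prob Q 3 = 1/3"
  by (simp add: doors_def)

lemma uniform_prize_iff_pmf:
  assumes "Q \<in> monte_mixed"
  shows "(\<forall>\<theta>\<in>doors. prize_prob Q \<theta> = 1/3) \<longleftrightarrow>
           pmf Q (1,2) + pmf Q (1,3) = 1/3 \<and> pmf Q (2,1) + pmf Q (2,3) = 1/3
         \<and> pmf Q (3,1) + pmf Q (3,2) = 1/3"
  by (simp only: prize_prob_uniform_iff prize_prob_doors[OF assms])

lemma Min_other_doors:
  "Min (doors - {1}) = 2" "Min (doors - {2}) = 1" "Min (doors - {3}) = 1"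
  by (simp_all add: doors_def insert_Diff_if)

text \<open>Holding on x wins against (x, y) only, since Monte offers y exactly then; switching to y
  wins whenever the prize is behind y.\<close>

lemma pure_win_doors:
  assumes "Q \<in> monte_mixed"
  shows "pure_win Q (1, a, b) =
           (if a = Hold then pmf Q (1,2) else prize_prob Q 2)
         + (if b = Hold then pmf Q (1,3) else prize_prob Q 3)"
    and "pure_win Q (2, a, b) =
           (if a = Hold then pmf Q (2,1) else prize_prob Q 1)
         + (if b = Hold then pmf Q (2,3) else prize_prob Q 3)"
    and "pure_win Q (3, a, b) =
           (if a = Hold then pmf Q (3,1) else prize_prob Q 1)
         + (if b = Hold then pmf Q (3,2) else prize_prob Q 2)"
  unfolding pure_win_def sum_monte_strats prize_prob_doors[OF assms]
  using Min_other_doors(1) \<comment> \<open>simplified with the goal, where door 1 turns into Suc 0\<close>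
  by (cases a; cases b; simp add: win_def Min_other_doors Let_def)+

lemma pure_win_always_switch:
  assumes "Q \<in> monte_mixed" "x \<in> doors"
  shows "pure_win Q (x, Switch, Switch) = 1 - prize_prob Q x"
proof -
  from assms(2) consider "x = 1" | "x = 2" | "x = 3"
    by (auto simp: doors_def)
  then show ?thesis
    using sum_prize_prob[OF assms(1)] pure_win_doors[OF assms(1), of Switch Switch]
    by cases simp_all
qed

lemma pure_win_le_1: "pure_win Q c \<le> 1"
proof -
  have "pure_win Q c \<le> sum (pmf Q) monte_strats"
  proof (unfold pure_win_def, intro sum_mono mult_left_le)
    show "win c m \<le> 1" for m
      by (simp add: win_def Let_def split: prod.split)
  qed simp
  also have "\<dots> = measure_pmf.prob Q monte_strats"
    using finite_monte_strats by (simp add: measure_measure_pmf_finite)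
  also have "\<dots> \<le> 1"
    by simp
  finally show ?thesis .
qed

lemma pmf_le_prize_prob: "pmf Q (\<theta>, d) \<le> prize_prob Q \<theta>"
  using measure_pmf.finite_measure_mono[of "{(\<theta>, d)}" "{m. fst m = \<theta>}" Q]
  by (simp add: measure_pmf_single)

lemma pure_win_le_two_thirds:
  assumes "Q \<in> monte_mixed" and uniform: "\<forall>\<theta>\<in>doors. prize_prob Q \<theta> = 1/3"
    and "c \<in> conie_strats"
  shows "pure_win Q c \<le> 2/3"
proof -
  have p: "prize_prob Q 1 = 1/3" "prize_prob Q 2 = 1/3" "prize_prob Q 3 = 1/3"
    using uniform unfolding prize_prob_uniform_iff by blast+
  note hold = pmf_le_prize_prob[of Q 1 2] pmf_le_prize_prob[of Q 1 3] pmf_le_prize_prob[of Q 2 1]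
    pmf_le_prize_prob[of Q 2 3] pmf_le_prize_prob[of Q 3 1] pmf_le_prize_prob[of Q 3 2]
  from assms(3) show ?thesis
  proof (cases rule: conie_strats_cases)
    case (1 a b)
    then show ?thesis
      unfolding 1 pure_win_doors(1)[OF assms(1)] using p hold
      by (cases a; cases b; simp only: action.distinct if_True if_False simp_thms; linarith)
  next
    case (2 a b)
    then show ?thesis
      unfolding 2 pure_win_doors(2)[OF assms(1)] using p hold
      by (cases a; cases b; simp only: action.distinct if_True if_False simp_thms; linarith)
  next
    case (3 a b)
    then show ?thesis
      unfolding 3 pure_win_doors(3)[OF assms(1)] using p hold
      by (cases a; cases b; simp only: action.distinct if_True if_False simp_thms; linarith)
  qed
qed

lemma W_eq_sum_pure_win: "W P Q = (\<Sum>c\<in>conie_strats. pmf P c * pure_win Q c)"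
  unfolding W_def pure_win_def by (simp add: sum_distrib_left mult.assoc)

lemma W_return_pmf: "c \<in> conie_strats \<Longrightarrow> W (return_pmf c) Q = pure_win Q c"
  using finite_conie_strats by (simp add: W_eq_sum_pure_win pmf_return indicator_def)

lemma W_le_if_pure_win_le:
  assumes "\<forall>c\<in>conie_strats. pure_win Q c \<le> B" "P \<in> conie_mixed"
  shows "W P Q \<le> B"
proof -
  have "W P Q \<le> (\<Sum>c\<in>conie_strats. pmf P c * B)"
    unfolding W_eq_sum_pure_win using assms(1) by (intro sum_mono mult_left_mono) auto
  also have "\<dots> = B"
    by (simp add: sum_distrib_right[symmetric] sum_pmf_conie_strats[OF assms(2)])
  finally show ?thesis .
qed

lemma pure_win_le_best_reply_win:
  assumes "c \<in> conie_strats"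
  shows "pure_win Q c \<le> best_reply_win Q"
proof -
  have "bdd_above ((\<lambda>P. W P Q) ` conie_mixed)"
    using W_le_if_pure_win_le[of Q 1] pure_win_le_1 by (auto intro!: bdd_aboveI)
  then have "W (return_pmf c) Q \<le> best_reply_win Q"
    unfolding best_reply_win_def
    by (rule cSUP_upper[OF return_pmf_in_conie_mixed[OF assms]])
  then show ?thesis
    using W_return_pmf[OF assms] by simp
qed

lemma best_reply_win_le:
  assumes "\<forall>c\<in>conie_strats. pure_win Q c \<le> B"
  shows "best_reply_win Q \<le> B"
proof -
  have "(1, Hold, Hold) \<in> conie_strats"
    by (simp add: conie_strats_def doors_def)
  then have "conie_mixed \<noteq> {}"
    using return_pmf_in_conie_mixed by blast
  then show ?thesis
    unfolding best_reply_win_def by (rule cSUP_least) (rule W_le_if_pure_win_le[OF assms])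
qed

lemma best_reply_win_ge:
  assumes "Q \<in> monte_mixed"
  shows "best_reply_win Q \<ge> 2/3"
    and "\<not> (\<forall>\<theta>\<in>doors. prize_prob Q \<theta> = 1/3) \<Longrightarrow> best_reply_win Q > 2/3"
proof -
  have switch: "1 - prize_prob Q x \<le> best_reply_win Q" if "x \<in> doors" for x
    using that pure_win_le_best_reply_win[of "(x, Switch, Switch)" Q]
    by (simp add: conie_strats_def pure_win_always_switch[OF assms])
  have s1: "1 - prize_prob Q 1 \<le> best_reply_win Q"
   and s2: "1 - prize_prob Q 2 \<le> best_reply_win Q"
   and s3: "1 - prize_prob Q 3 \<le> best_reply_win Q"
    using switch by (simp_all add: doors_def)
  note total = sum_prize_prob[OF assms]
  show "best_reply_win Q \<ge> 2/3"
    using s1 s2 s3 total by linarith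
  assume "\<not> (\<forall>\<theta>\<in>doors. prize_prob Q \<theta> = 1/3)"
  then have "prize_prob Q 1 < 1/3 \<or> prize_prob Q 2 < 1/3 \<or> prize_prob Q 3 < 1/3"
    using total unfolding prize_prob_uniform_iff by linarith
  then show "best_reply_win Q > 2/3"
    using s1 s2 s3 by linarith
qed

lemma best_reply_win_uniform:
  assumes "Q \<in> monte_mixed" "\<forall>\<theta>\<in>doors. prize_prob Q \<theta> = 1/3"
  shows "best_reply_win Q = 2/3"
  using best_reply_win_le pure_win_le_two_thirds[OF assms] best_reply_win_ge(1)[OF assms(1)]
  by (meson antisym)

lemma uniform_monte_strategy_exists:
  "\<exists>Q\<in>monte_mixed. \<forall>\<theta>\<in>doors. prize_prob Q \<theta> = 1/3"
proof
  let ?Q = "pmf_of_set {(1,2), (2,1), (3,1)} :: monte_pure pmf"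
  show "?Q \<in> monte_mixed"
    by (auto simp: monte_mixed_def monte_strats_eq)
  then show "\<forall>\<theta>\<in>doors. prize_prob ?Q \<theta> = 1/3"
    by (subst uniform_prize_iff_pmf) simp_all
qed

lemma game_value: "(INF Q\<in>monte_mixed. best_reply_win Q) = 2/3"
proof (rule antisym)
  obtain Q where Q: "Q \<in> monte_mixed" "\<forall>\<theta>\<in>doors. prize_prob Q \<theta> = 1/3"
    using uniform_monte_strategy_exists by blast
  have "bdd_below (best_reply_win ` monte_mixed)"
    using best_reply_win_ge(1) by (auto intro!: bdd_belowI[where m = "2/3"])
  then have "(INF Q\<in>monte_mixed. best_reply_win Q) \<le> best_reply_win Q"
    by (rule cINF_lower[OF _ Q(1)])
  then show "(INF Q\<in>monte_mixed. best_reply_win Q) \<le> 2/3"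
    using best_reply_win_uniform[OF Q] by simp
  show "2/3 \<le> (INF Q\<in>monte_mixed. best_reply_win Q)"
    using Q(1) best_reply_win_ge(1) by (intro cINF_greatest) auto
qed

lemma is_minimax_iff_uniform_prize:
  assumes "Q \<in> monte_mixed"
  shows "is_minimax Q \<longleftrightarrow> (\<forall>\<theta>\<in>doors. prize_prob Q \<theta> = 1/3)"
  using assms game_value best_reply_win_uniform[OF assms] best_reply_win_ge[OF assms]
  unfolding is_minimax_def best_reply_win_def[symmetric] by force

lemma uniform_prize_iff_Qstar:
  assumes "Q \<in> monte_mixed"
  shows "(\<forall>\<theta>\<in>doors. prize_prob Q \<theta> = 1/3) \<longleftrightarrow>
         (\<exists>l1\<in>{0..1}. \<exists>l2\<in>{0..1}. \<exists>l3\<in>{0..1}. pmf Q = Qstar l1 l2 l3)"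
proof
  assume "\<forall>\<theta>\<in>doors. prize_prob Q \<theta> = 1/3"
  then have p: "pmf Q (1,2) + pmf Q (1,3) = 1/3" "pmf Q (2,1) + pmf Q (2,3) = 1/3"
    "pmf Q (3,1) + pmf Q (3,2) = 1/3"
    using uniform_prize_iff_pmf[OF assms] by blast+
  note nonneg = pmf_nonneg[of Q "(1,2)"] pmf_nonneg[of Q "(1,3)"] pmf_nonneg[of Q "(2,1)"]
    pmf_nonneg[of Q "(2,3)"] pmf_nonneg[of Q "(3,1)"] pmf_nonneg[of Q "(3,2)"]
  have "pmf Q m = Qstar (3 * pmf Q (1,2)) (3 * pmf Q (2,1)) (3 * pmf Q (3,1)) m" for m
  proof (cases "m \<in> monte_strats")
    case True
    then show ?thesis
      using p unfolding monte_strats_eq Qstar_def by auto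
  next
    case False
    then have "pmf Q m = 0"
      using assms by (auto simp: monte_mixed_def pmf_eq_0_set_pmf)
    with False show ?thesis
      unfolding monte_strats_eq Qstar_def by auto
  qed
  moreover have "3 * pmf Q (1,2) \<in> {0..1}" "3 * pmf Q (2,1) \<in> {0..1}" "3 * pmf Q (3,1) \<in> {0..1}"
    unfolding atLeastAtMost_iff using p nonneg by linarith+
  ultimately show "\<exists>l1\<in>{0..1}. \<exists>l2\<in>{0..1}. \<exists>l3\<in>{0..1}. pmf Q = Qstar l1 l2 l3"
    by blast
next
  assume "\<exists>l1\<in>{0..1}. \<exists>l2\<in>{0..1}. \<exists>l3\<in>{0..1}. pmf Q = Qstar l1 l2 l3"
  then obtain l1 l2 l3 where Q: "pmf Q = Qstar l1 l2 l3"
    by blast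
  have "pmf Q (1,2) + pmf Q (1,3) = 1/3" "pmf Q (2,1) + pmf Q (2,3) = 1/3"
    "pmf Q (3,1) + pmf Q (3,2) = 1/3"
    unfolding Q Qstar_def by (simp_all add: field_simps)
  then show "\<forall>\<theta>\<in>doors. prize_prob Q \<theta> = 1/3"
    using uniform_prize_iff_pmf[OF assms] by (simp add: field_simps)
qed

theorem mainTheorem7:
  assumes "Q \<in> monte_mixed"
  shows "(is_minimax Q \<longleftrightarrow>
           (\<exists>l1\<in>{0..1}. \<exists>l2\<in>{0..1}. \<exists>l3\<in>{0..1}. pmf Q = Qstar l1 l2 l3))
       \<and> (is_minimax Q \<longleftrightarrow>
           (\<forall>\<theta>\<in>doors. measure_pmf.prob Q {m. fst m = \<theta>} = 1/3))"
  using is_minimax_iff_uniform_prize[OF assms] uniform_prize_iff_Qstar[OF assms] by simp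

end
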